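(* If $\pi \in S_n$ then $\displaystyle \Delta_{\odot}([\pi]) = \sum_{\pi \overset{\bullet}=\pi'\pi''} [\pi']\otimes [\pi'']$ and $\epsilon_\odot([\pi]) = \begin{cases} 1 & \text{if }\ell(\pi)=0 \\ 0 & \text{if }\ell(\pi) \neq 0. \end{cases}$
   Context: Let $\Bbbk$ be a field. For a word (finite sequence of positive integers) $w=w_1\cdots w_m$ with $\max(w)\le n$, $[w,n]$ denotes the linear endomorphism of the $\Bbbk$-span of all words sending a word $v$ of length $n$ to $v_{w_1}\cdots v_{w_m}$ and other words to $0$. Define $\Delta_\odot([w,n])=\sum_{i=0}^m [w_1\cdots w_i,n]\otimes[w_{i+1}\cdots w_m,n]$ and $\epsilon_\odot([w,n])=1$ if $w=\emptyset$, else $0$, extended linearly. For $\pi\in S_n$ (generated by $s_i=(i,i+1)$), $\mathcal{R}(\pi)$ is the set of reduced words, $\ell(\pi)$ the length, and $[\pi]=\sum_{w\in\mathcal{R}(\pi)}[w,n-1]$. Write $\pi\overset{\bullet}=\pi'\pi''$ if $\pi',\pi''\in S_n$, $\pi=\pi'\pi''$ and $\ell(\pi)=\ell(\pi')+\ell(\pi'')$. *)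

theory Defs
  imports "HOL-Combinatorics.Permutations"
begin

text \<open>The basis element [w,n] of the span is indexed by the pair (w,n) (with max w \<le> n).
  Elements of the span are represented by their coefficient functions on this basis;
  elements of the tensor square by coefficient functions on pairs of basis indices.\<close>

type_synonym basis_idx = "nat list \<times> nat"

definition bas :: "nat list \<Rightarrow> nat \<Rightarrow> basis_idx \<Rightarrow> 'k::field" where
  "bas w n = (\<lambda>x. if x = (w, n) then 1 else 0)"

definition tensor :: "(basis_idx \<Rightarrow> 'k::field) \<Rightarrow> (basis_idx \<Rightarrow> 'k) \<Rightarrow> (basis_idx \<times> basis_idx \<Rightarrow> 'k)" where
  "tensor f g = (\<lambda>(x, y). f x * g y)"

definition Delta_bas :: "basis_idx \<Rightarrow> (basis_idx \<times> basis_idx \<Rightarrow> 'k::field)" where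
  "Delta_bas b = (\<lambda>p. \<Sum>i\<in>{0..length (fst b)}.
      tensor (bas (take i (fst b)) (snd b)) (bas (drop i (fst b)) (snd b)) p)"

text \<open>Linear extension (for finitely supported coefficient functions).\<close>
definition Delta_odot :: "(basis_idx \<Rightarrow> 'k::field) \<Rightarrow> (basis_idx \<times> basis_idx \<Rightarrow> 'k)" where
  "Delta_odot f = (\<lambda>p. \<Sum>x\<in>{x. f x \<noteq> 0}. f x * Delta_bas x p)"

definition eps_odot :: "(basis_idx \<Rightarrow> 'k::field) \<Rightarrow> 'k" where
  "eps_odot f = (\<Sum>x\<in>{x. f x \<noteq> 0}. f x * (if fst x = [] then 1 else 0))"

definition s :: "nat \<Rightarrow> nat \<Rightarrow> nat" where
  "s i = transpose i (Suc i)"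

definition word_prod :: "nat list \<Rightarrow> nat \<Rightarrow> nat" where
  "word_prod w = foldr (\<lambda>i f. s i \<circ> f) w id"

definition sn_word :: "nat \<Rightarrow> nat list \<Rightarrow> bool" where
  "sn_word n w \<longleftrightarrow> set w \<subseteq> {1..<n}"

definition len :: "nat \<Rightarrow> (nat \<Rightarrow> nat) \<Rightarrow> nat" where
  "len n \<pi> = (LEAST m. \<exists>w. sn_word n w \<and> length w = m \<and> word_prod w = \<pi>)"

definition reduced_words :: "nat \<Rightarrow> (nat \<Rightarrow> nat) \<Rightarrow> nat list set" where
  "reduced_words n \<pi> = {w. sn_word n w \<and> word_prod w = \<pi> \<and> length w = len n \<pi>}"

definition perm_elem :: "nat \<Rightarrow> (nat \<Rightarrow> nat) \<Rightarrow> basis_idx \<Rightarrow> 'k::field" where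
  "perm_elem n \<pi> = (\<lambda>x. \<Sum>w\<in>reduced_words n \<pi>. bas w (n - 1) x)"

end

theory Submission
  imports Defs
begin

text \<open>Both sides are compared coefficientwise on basis tensors \<open>[u,n-1] \<otimes> [v,n-1]\<close>.
  Deconcatenating the reduced words of \<open>\<pi>\<close> produces each such tensor at most once, namely
  when \<open>u v\<close> is a reduced word of \<open>\<pi>\<close>. A word \<open>u v\<close> is reduced for \<open>\<pi>\<close> exactly when \<open>u\<close> and \<open>v\<close>
  are reduced words of factors \<open>\<pi>', \<pi>''\<close> with \<open>\<pi> = \<pi>' \<pi>''\<close> and \<open>\<ell>(\<pi>) = \<ell>(\<pi>') + \<ell>(\<pi>'')\<close>:
  replacing \<open>u\<close> and \<open>v\<close> by reduced words shows \<open>\<ell>(\<pi>) \<le> \<ell>(\<pi>') + \<ell>(\<pi>'') \<le> |u| + |v|\<close>.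
  Since the factors are determined by \<open>u\<close> and \<open>v\<close>, the coefficient on the right-hand side is
  also 0 or 1 under the same condition. For the counit, the empty word is reduced for \<open>\<pi>\<close>
  iff \<open>\<ell>(\<pi>) = 0\<close>, because the simple transpositions generate \<open>S\<^sub>n\<close>.\<close>

lemma word_prod_Nil [simp]: "word_prod [] = id"
  by (simp add: word_prod_def)

lemma word_prod_Cons [simp]: "word_prod (a # w) = s a \<circ> word_prod w"
  by (simp add: word_prod_def)

lemma word_prod_append [simp]: "word_prod (u @ v) = word_prod u \<circ> word_prod v"
  by (induction u) auto

lemma sn_word_append [simp]: "sn_word n (u @ v) \<longleftrightarrow> sn_word n u \<and> sn_word n v"
  by (auto simp: sn_word_def)

lemma word_prod_permutes: "sn_word n w \<Longrightarrow> word_prod w permutes {1..n}"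
proof (induction w)
  case Nil
  show ?case by (simp only: word_prod_Nil permutes_id)
next
  case (Cons a w)
  then have "s a permutes {1..n}" and "sn_word n w"
    by (auto simp: sn_word_def s_def intro!: permutes_swap_id)
  with Cons.IH show ?case by (metis word_prod_Cons permutes_compose)
qed

lemma ex_word_prod_eq_transpose:
  assumes "1 \<le> a" "a < b" "b \<le> n"
  shows "\<exists>w. sn_word n w \<and> word_prod w = transpose a b"
  using assms
proof (induction "b - a" arbitrary: a)
  case 0
  then show ?case by simp
next
  case (Suc k)
  show ?case
  proof (cases "Suc a = b")
    case True
    with Suc.prems show ?thesis
      by (intro exI[of _ "[a]"]) (auto simp: sn_word_def s_def)
  next
    case False
    moreover have "k = b - Suc a"
      using Suc.hyps(2) by arith
    ultimately obtain w where w: "sn_word n w" "word_prod w = transpose (Suc a) b"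
      using Suc.hyps(1)[of "Suc a"] Suc.prems by auto
    have "transpose a b = s a \<circ> transpose (Suc a) b \<circ> s a"
      using False Suc.prems by (auto simp: s_def transpose_def fun_eq_iff)
    with w Suc.prems show ?thesis
      by (intro exI[of _ "a # w @ [a]"]) (auto simp: sn_word_def o_assoc)
  qed
qed

lemma ex_word_prod_eq_permutation:
  assumes "\<pi> permutes {1..n}"
  shows "\<exists>w. sn_word n w \<and> word_prod w = \<pi>"
  using assms finite_atLeastAtMost[of 1 n]
proof (induction rule: permutes_induct)
  case id
  show ?case by (intro exI[of _ "[]"]) (simp add: sn_word_def)
next
  case (swap a b p)
  then obtain w where w: "sn_word n w" "word_prod w = p" by blast
  have "\<exists>v. sn_word n v \<and> word_prod v = transpose a b"
  proof (cases "a < b")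
    case True
    with swap show ?thesis by (auto intro: ex_word_prod_eq_transpose)
  next
    case False
    with swap have "b < a" by auto
    with swap show ?thesis using ex_word_prod_eq_transpose[of b a n] by (auto simp: transpose_commute)
  qed
  with w show ?case by (metis sn_word_append word_prod_append)
qed

lemma len_le_length: "sn_word n w \<Longrightarrow> len n (word_prod w) \<le> length w"
  unfolding len_def by (rule Least_le) blast

lemma reduced_words_nonempty:
  assumes "sn_word n w"
  obtains w' where "w' \<in> reduced_words n (word_prod w)"
proof -
  have "\<exists>m w'. sn_word n w' \<and> length w' = m \<and> word_prod w' = word_prod w"
    using assms by blast
  from LeastI_ex[OF this] show ?thesis
    using that unfolding len_def reduced_words_def by blast
qed

lemma finite_reduced_words: "finite (reduced_words n \<pi>)"
proof (rule finite_subset)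
  show "reduced_words n \<pi> \<subseteq> {w. set w \<subseteq> {1..<n} \<and> length w = len n \<pi>}"
    by (auto simp: reduced_words_def sn_word_def)
  show "finite {w. set w \<subseteq> {1..<n} \<and> length w = len n \<pi>}"
    by (rule finite_lists_length_eq) simp
qed

lemma append_in_reduced_words_iff:
  "u @ v \<in> reduced_words n \<pi> \<longleftrightarrow>
     u \<in> reduced_words n (word_prod u) \<and> v \<in> reduced_words n (word_prod v) \<and>
     \<pi> = word_prod u \<circ> word_prod v \<and> len n \<pi> = len n (word_prod u) + len n (word_prod v)"
proof
  assume "u @ v \<in> reduced_words n \<pi>"
  then have su: "sn_word n u" and sv: "sn_word n v" and \<pi>: "\<pi> = word_prod u \<circ> word_prod v"
    and length_uv: "length u + length v = len n \<pi>"
    by (auto simp: reduced_words_def)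
  obtain u' where u': "u' \<in> reduced_words n (word_prod u)"
    using su by (rule reduced_words_nonempty)
  obtain v' where v': "v' \<in> reduced_words n (word_prod v)"
    using sv by (rule reduced_words_nonempty)
  have "len n \<pi> \<le> len n (word_prod u) + len n (word_prod v)"
    using len_le_length[of n "u' @ v'"] u' v' \<pi> by (simp add: reduced_words_def)
  moreover have "len n (word_prod u) \<le> length u" "len n (word_prod v) \<le> length v"
    using su sv by (simp_all add: len_le_length)
  ultimately show "u \<in> reduced_words n (word_prod u) \<and> v \<in> reduced_words n (word_prod v) \<and>
     \<pi> = word_prod u \<circ> word_prod v \<and> len n \<pi> = len n (word_prod u) + len n (word_prod v)"
    using su sv \<pi> length_uv by (auto simp: reduced_words_def)
qed (auto simp: reduced_words_def)

lemma Nil_in_reduced_words_iff: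
  assumes "\<pi> permutes {1..n}"
  shows "[] \<in> reduced_words n \<pi> \<longleftrightarrow> len n \<pi> = 0"
proof -
  obtain w where "sn_word n w" "word_prod w = \<pi>"
    using ex_word_prod_eq_permutation[OF assms] by blast
  then obtain w' where "w' \<in> reduced_words n \<pi>"
    by (metis reduced_words_nonempty)
  then show ?thesis by (auto simp: reduced_words_def sn_word_def)
qed

lemma sum_eq_conj_indicator:
  "finite S \<Longrightarrow> (\<Sum>x\<in>S. if x = a \<and> c then 1 else 0) = (if a \<in> S \<and> c then 1 else (0::'a::semiring_1))"
  by (cases c) (simp_all add: sum.delta)

lemma perm_elem_apply:
  "perm_elem n \<pi> (w, m) = (if w \<in> reduced_words n \<pi> \<and> m = n - 1 then 1 else 0)"
proof -
  have "perm_elem n \<pi> (w, m) = (\<Sum>w'\<in>reduced_words n \<pi>. if w' = w \<and> m = n - 1 then 1 else 0)"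
    unfolding perm_elem_def bas_def by (intro sum.cong) auto
  also have "\<dots> = (if w \<in> reduced_words n \<pi> \<and> m = n - 1 then 1 else 0)"
    by (simp add: sum_eq_conj_indicator finite_reduced_words)
  finally show ?thesis .
qed

lemma sum_support_perm_elem:
  "(\<Sum>x\<in>{x. perm_elem n \<pi> x \<noteq> 0}. perm_elem n \<pi> x * g x) =
     (\<Sum>w\<in>reduced_words n \<pi>. g (w, n - 1))"
proof -
  have support: "{x. perm_elem n \<pi> x \<noteq> 0} = (\<lambda>w. (w, n - 1)) ` reduced_words n \<pi>"
    by (auto simp: perm_elem_apply split: if_splits)
  show ?thesis
    unfolding support by (subst sum.reindex) (auto simp: inj_on_def perm_elem_apply)
qed

lemma sum_split_positions:
  "(\<Sum>i\<in>{0..length w}. if take i w = u \<and> drop i w = v then c else 0) =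
     (if w = u @ v then c else (0::'a::comm_monoid_add))"
proof (cases "w = u @ v")
  case True
  have "take i w = u \<and> drop i w = v \<longleftrightarrow> i = length u" if "i \<le> length w" for i
    using True that by (metis append_eq_conv_conj length_take min_absorb2)
  then have "(\<Sum>i\<in>{0..length w}. if take i w = u \<and> drop i w = v then c else 0) =
      (\<Sum>i\<in>{0..length w}. if i = length u then c else 0)"
    by (intro sum.cong) auto
  with True show ?thesis by simp
next
  case False
  then show ?thesis by (auto intro!: sum.neutral)
qed

lemma Delta_bas_apply:
  "Delta_bas (w, m) ((u, a), (v, b)) = (if w = u @ v \<and> a = m \<and> b = m then 1 else 0)"
proof -
  have "Delta_bas (w, m) ((u, a), (v, b)) =
      (\<Sum>i\<in>{0..length w}. if take i w = u \<and> drop i w = v then (if a = m \<and> b = m then 1 else 0) else 0)"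
    unfolding Delta_bas_def tensor_def bas_def by (intro sum.cong) auto
  also have "\<dots> = (if w = u @ v \<and> a = m \<and> b = m then 1 else 0)"
    by (simp only: sum_split_positions) auto
  finally show ?thesis .
qed

lemma Delta_odot_perm_elem_apply:
  "Delta_odot (perm_elem n \<pi>) ((u, a), (v, b)) =
     (if u @ v \<in> reduced_words n \<pi> \<and> a = n - 1 \<and> b = n - 1 then 1 else 0)"
  unfolding Delta_odot_def sum_support_perm_elem Delta_bas_apply
  by (simp add: sum_eq_conj_indicator finite_reduced_words)

lemma eps_odot_perm_elem: "eps_odot (perm_elem n \<pi>) = (if [] \<in> reduced_words n \<pi> then 1 else 0)"
  unfolding eps_odot_def sum_support_perm_elem
  using finite_reduced_words[of n \<pi>] by (simp add: sum.delta')

lemma sum_tensor_perm_elem_apply: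
  assumes "finite P"
  shows "(\<Sum>(\<sigma>, \<tau>)\<in>P. tensor (perm_elem n \<sigma>) (perm_elem n \<tau>) ((u, a), (v, b))) =
    (if (word_prod u, word_prod v) \<in> P \<and> u \<in> reduced_words n (word_prod u) \<and>
        v \<in> reduced_words n (word_prod v) \<and> a = n - 1 \<and> b = n - 1 then 1 else 0)"
proof -
  let ?c = "u \<in> reduced_words n (word_prod u) \<and> v \<in> reduced_words n (word_prod v) \<and>
            a = n - 1 \<and> b = n - 1"
  have tensor_eq: "tensor (perm_elem n \<sigma>) (perm_elem n \<tau>) ((u, a), (v, b)) =
      (if (\<sigma>, \<tau>) = (word_prod u, word_prod v) \<and> ?c then 1 else 0)" for \<sigma> \<tau>
    by (auto simp: tensor_def perm_elem_apply reduced_words_def)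
  have "(\<Sum>(\<sigma>, \<tau>)\<in>P. tensor (perm_elem n \<sigma>) (perm_elem n \<tau>) ((u, a), (v, b))) =
      (\<Sum>x\<in>P. if x = (word_prod u, word_prod v) \<and> ?c then 1 else 0)"
    by (intro sum.cong refl) (simp only: split_paired_all case_prod_conv tensor_eq)
  with assms show ?thesis
    by (simp only: sum_eq_conj_indicator conj_assoc)
qed

theorem corollary4p2:
  fixes \<pi> :: "nat \<Rightarrow> nat" and n :: nat
  assumes "\<pi> permutes {1..n}"
  shows "Delta_odot (perm_elem n \<pi> :: basis_idx \<Rightarrow> 'k::field) =
           (\<lambda>p. \<Sum>(\<sigma>, \<tau>)\<in>{(\<sigma>, \<tau>). \<sigma> permutes {1..n} \<and> \<tau> permutes {1..n} \<and>
                              \<pi> = \<sigma> \<circ> \<tau> \<and> len n \<pi> = len n \<sigma> + len n \<tau>}.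
                  tensor (perm_elem n \<sigma>) (perm_elem n \<tau>) p) \<and>
         eps_odot (perm_elem n \<pi> :: basis_idx \<Rightarrow> 'k::field) = (if len n \<pi> = 0 then 1 else 0)"
proof
  let ?P = "{(\<sigma>, \<tau>). \<sigma> permutes {1..n} \<and> \<tau> permutes {1..n} \<and>
                     \<pi> = \<sigma> \<circ> \<tau> \<and> len n \<pi> = len n \<sigma> + len n \<tau>}"
  have "finite ?P"
    by (rule finite_subset[of _ "{\<sigma>. \<sigma> permutes {1..n}} \<times> {\<tau>. \<tau> permutes {1..n}}"])
      (auto simp: finite_permutations)
  show "Delta_odot (perm_elem n \<pi> :: basis_idx \<Rightarrow> 'k) =
      (\<lambda>p. \<Sum>(\<sigma>, \<tau>)\<in>?P. tensor (perm_elem n \<sigma>) (perm_elem n \<tau>) p)"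
  proof
    fix p :: "basis_idx \<times> basis_idx"
    obtain u a v b where p: "p = ((u, a), (v, b))" by (metis prod.exhaust)
    show "Delta_odot (perm_elem n \<pi> :: basis_idx \<Rightarrow> 'k) p =
        (\<Sum>(\<sigma>, \<tau>)\<in>?P. tensor (perm_elem n \<sigma>) (perm_elem n \<tau>) p)"
      unfolding p Delta_odot_perm_elem_apply sum_tensor_perm_elem_apply[OF \<open>finite ?P\<close>]
        append_in_reduced_words_iff
      using word_prod_permutes[of n u] word_prod_permutes[of n v] by (auto simp: reduced_words_def)
  qed
  show "eps_odot (perm_elem n \<pi> :: basis_idx \<Rightarrow> 'k) = (if len n \<pi> = 0 then 1 else 0)"
    using assms by (simp add: eps_odot_perm_elem Nil_in_reduced_words_iff)
qed

end
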